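(* Let $p_1>p_2$ be relatively prime positive integers. Then the set $\{S_c(p_1,p_2): c\in[0,1]\}$ of apportionment sequences of stationary divisor methods contains exactly $p_1-p_2+1$ distinct sequences.
   Context: Stationary divisor method with cut point $c\in[0,1]$ for votes $(p_1,p_2)$: seats are allocated one at a time. Initially $a_1=a_2=0$; each next seat goes to a party $i$ maximizing $p_i/(a_i+c)$, whose $a_i$ then increases by $1$. Ties are broken in favor of party $1$. For $c=0$ the convention is that $p_1/0>p_2/0$, and $p_i/0>p_j/k$ for $k>0$. $S_c(p_1,p_2)$ is the infinite sequence of party labels (in $\{1,2\}$) of successive seats. *)

theory Defs
  imports Complex_Main
begin

text \<open>Party i has priority p_i/(a_i+c); ties go to party 1.  A zero denominator
  (only possible for c = 0 and a_i = 0) gives infinite priority, with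
  p1/0 > p2/0.\<close>
definition prefer1 :: "real \<Rightarrow> real \<Rightarrow> real \<Rightarrow> nat \<Rightarrow> nat \<Rightarrow> bool" where
  "prefer1 c p1 p2 a1 a2 =
     (if real a1 + c = 0 then True
      else if real a2 + c = 0 then False
      else p1 / (real a1 + c) \<ge> p2 / (real a2 + c))"

fun alloc :: "real \<Rightarrow> real \<Rightarrow> real \<Rightarrow> nat \<Rightarrow> nat \<times> nat" where
  "alloc c p1 p2 0 = (0, 0)"
| "alloc c p1 p2 (Suc n) =
     (let (a1, a2) = alloc c p1 p2 n in
      if prefer1 c p1 p2 a1 a2 then (a1 + 1, a2) else (a1, a2 + 1))"

text \<open>The apportionment sequence S_c(p1,p2): the label (1 or 2) of the (n+1)-th seat.\<close>
definition S :: "real \<Rightarrow> real \<Rightarrow> real \<Rightarrow> nat \<Rightarrow> nat" where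
  "S c p1 p2 n = (let (a1, a2) = alloc c p1 p2 n in
                  if prefer1 c p1 p2 a1 a2 then 1 else 2)"

end

theory Submission
  imports Defs "HOL-Number_Theory.Cong"
begin

(* Call p2 a1 - p1 a2 the potential of the seat counts (a1, a2) and let m = floor ((p1 - p2) c).
   Party 1 gets the next seat exactly when the potential is at most m, so S_c depends on c only
   through m, which ranges over {0, ..., p1 - p2}.  Conversely, the potential moves by +p2 or -p1,
   so it stays in the window (m - p1, m + p2] of p1 + p2 integers and is congruent to p2 n after
   n seats; since p2 is a unit modulo p1 + p2, it equals m + 1 after some n seats.  There the
   method of threshold m gives the seat to party 2, while any method of higher threshold, having
   made the same first n choices, gives it to party 1. *)

context
  fixes k :: "nat \<Rightarrow> int" and a b :: nat and m :: int
  assumes step: "\<And>n. k (Suc n) = (if k n \<le> m then k n + int b else k n - int a)"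
begin

lemma threshold_orbit_in_window:
  assumes "m - int a < k 0" "k 0 \<le> m + int b"
  shows "m - int a < k n \<and> k n \<le> m + int b"
  using assms by (induction n) (auto simp: step)

lemma threshold_orbit_cong: "[k n = k 0 + int b * int n] (mod int a + int b)"
proof (induction n)
  case 0
  show ?case by simp
next
  case (Suc n)
  have "[k n - int a = k n + int b] (mod int a + int b)"
    unfolding cong_iff_lin by (rule exI[of _ 1]) simp
  then have "[k (Suc n) = k n + int b] (mod int a + int b)"
    by (simp add: step)
  also have "[k n + int b = k 0 + int b * int (Suc n)] (mod int a + int b)"
    using Suc cong_add_rcancel[of "k n" "int b" "k 0 + int b * int n"] by (simp add: algebra_simps)
  finally show ?case .
qed

lemma threshold_orbit_hits_window:
  assumes "m - int a < k 0" "k 0 \<le> m + int b"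
    and "m - int a < t" "t \<le> m + int b"
    and "coprime a b"
  shows "\<exists>n. k n = t"
proof -
  let ?N = "int a + int b"
  have "coprime ?N (int b)"
    using \<open>coprime a b\<close> by (simp add: coprime_iff_gcd_eq_1)
  then obtain x where x: "[int b * x = 1] (mod ?N)"
    using cong_solve_coprime_int coprime_commute by blast
  define n where "n = nat ((x * (t - k 0)) mod ?N)"
  have "?N > 0" using assms(3,4) by linarith
  then have "int n = (x * (t - k 0)) mod ?N" by (simp add: n_def)
  then have "[int b * int n = int b * x * (t - k 0)] (mod ?N)"
    by (simp add: cong_def mod_mult_right_eq mult.assoc)
  also have "[int b * x * (t - k 0) = 1 * (t - k 0)] (mod ?N)"
    using x by (rule cong_scalar_right)
  finally have "[k 0 + int b * int n = t] (mod ?N)"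
    using cong_add_lcancel[of "k 0" _ "t - k 0"] by simp
  then have "[k n - (m - int a + 1) = t - (m - int a + 1)] (mod ?N)"
    using threshold_orbit_cong[of n] cong_trans cong_diff cong_refl by blast
  moreover have "m - int a < k n \<and> k n \<le> m + int b"
    using threshold_orbit_in_window assms(1,2) by blast
  ultimately have "k n - (m - int a + 1) = t - (m - int a + 1)"
    using assms(3,4) by (intro cong_less_imp_eq_int) auto
  then show ?thesis by auto
qed

end

definition threshold :: "nat \<Rightarrow> nat \<Rightarrow> real \<Rightarrow> int" where
  "threshold p1 p2 c = \<lfloor>(real p1 - real p2) * c\<rfloor>"

definition potential :: "real \<Rightarrow> nat \<Rightarrow> nat \<Rightarrow> nat \<Rightarrow> int" where
  "potential c p1 p2 n =
     (case alloc c (real p1) (real p2) n of (a1, a2) \<Rightarrow> int p2 * int a1 - int p1 * int a2)"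

lemma prefer1_iff_threshold:
  fixes p1 p2 a1 a2 :: nat
  assumes "0 \<le> c" "0 < p2"
  shows "prefer1 c (real p1) (real p2) a1 a2 \<longleftrightarrow>
         int p2 * int a1 - int p1 * int a2 \<le> threshold p1 p2 c"
proof -
  have "prefer1 c (real p1) (real p2) a1 a2 \<longleftrightarrow>
        real p2 * (real a1 + c) \<le> real p1 * (real a2 + c)"
  proof (cases "real a1 + c = 0")
    case True
    with assms show ?thesis by (simp add: prefer1_def)
  next
    case False
    then have a1_pos: "real a1 + c > 0" using assms by simp
    show ?thesis
    proof (cases "real a2 + c = 0")
      case True
      have "real p2 * (real a1 + c) > 0" using a1_pos assms by simp
      with True a1_pos show ?thesis by (simp add: prefer1_def)
    next
      case False
      then have "real a2 + c > 0" using assms by simp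
      with a1_pos show ?thesis by (simp add: prefer1_def divide_simps mult.commute)
    qed
  qed
  also have "\<dots> \<longleftrightarrow> real_of_int (int p2 * int a1 - int p1 * int a2) \<le> (real p1 - real p2) * c"
    by (simp add: algebra_simps)
  finally show ?thesis
    by (simp add: threshold_def le_floor_iff)
qed

lemma potential_Suc:
  assumes "0 \<le> c" "0 < p2"
  shows "potential c p1 p2 (Suc n) =
    (if potential c p1 p2 n \<le> threshold p1 p2 c
     then potential c p1 p2 n + int p2 else potential c p1 p2 n - int p1)"
  using prefer1_iff_threshold[OF assms]
  by (auto simp: potential_def algebra_simps split: prod.splits)

lemma threshold_bounds:
  assumes "0 \<le> c" "c \<le> 1" "p2 \<le> p1"
  shows "0 \<le> threshold p1 p2 c" "threshold p1 p2 c \<le> int p1 - int p2"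
proof -
  have "0 \<le> (real p1 - real p2) * c" "(real p1 - real p2) * c \<le> real p1 - real p2"
    using assms by (simp_all add: mult_left_le)
  then show "0 \<le> threshold p1 p2 c" "threshold p1 p2 c \<le> int p1 - int p2"
    unfolding threshold_def by (simp_all add: le_floor_iff floor_le_iff)
qed

lemma threshold_of_int_div:
  assumes "p2 < p1"
  shows "threshold p1 p2 (real_of_int m / (real p1 - real p2)) = m"
  using assms by (simp add: threshold_def)

lemma potential_reaches_above_threshold:
  assumes "0 \<le> c" "c \<le> 1" "0 < p2" "p2 < p1" "coprime p1 p2"
  shows "\<exists>n. potential c p1 p2 n = threshold p1 p2 c + 1"
proof (rule threshold_orbit_hits_window)
  show "\<And>n. potential c p1 p2 (Suc n) = (if potential c p1 p2 n \<le> threshold p1 p2 c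
      then potential c p1 p2 n + int p2 else potential c p1 p2 n - int p1)"
    using potential_Suc assms by blast
  show "threshold p1 p2 c - int p1 < potential c p1 p2 0"
    and "potential c p1 p2 0 \<le> threshold p1 p2 c + int p2"
    using threshold_bounds[of c p2 p1] assms by (auto simp: potential_def)
qed (use assms in auto)

lemma S_cong:
  assumes "prefer1 c p1 p2 = prefer1 c' p1 p2"
  shows "S c p1 p2 = S c' p1 p2"
proof -
  have "alloc c p1 p2 n = alloc c' p1 p2 n" for n
    using assms by (induction n) (simp_all split: prod.splits)
  with assms show ?thesis
    by (simp add: S_def fun_eq_iff)
qed

lemma alloc_eq_if_S_eq:
  assumes "S c p1 p2 = S c' p1 p2"
  shows "alloc c p1 p2 n = alloc c' p1 p2 n"
proof (induction n)
  case (Suc n)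
  moreover have "S c p1 p2 n = S c' p1 p2 n" using assms by simp
  ultimately show ?case
    by (auto simp: S_def split: prod.splits if_splits)
qed simp

lemma S_eq_iff_threshold_eq:
  fixes p1 p2 :: nat
  assumes c: "0 \<le> c" "c \<le> 1" and c': "0 \<le> c'" "c' \<le> 1"
    and p: "0 < p2" "p2 < p1" "coprime p1 p2"
  shows "S c (real p1) (real p2) = S c' (real p1) (real p2) \<longleftrightarrow>
         threshold p1 p2 c = threshold p1 p2 c'"
proof
  assume "threshold p1 p2 c = threshold p1 p2 c'"
  then have "prefer1 c (real p1) (real p2) = prefer1 c' (real p1) (real p2)"
    using prefer1_iff_threshold c(1) c'(1) p(1) by (auto simp: fun_eq_iff)
  then show "S c (real p1) (real p2) = S c' (real p1) (real p2)"
    by (rule S_cong)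
next
  have S_differs: "S c (real p1) (real p2) \<noteq> S c' (real p1) (real p2)"
    if c: "0 \<le> c" "c \<le> 1" and c': "0 \<le> c'" "c' \<le> 1"
      and less: "threshold p1 p2 c < threshold p1 p2 c'" for c c'
  proof
    assume S_eq: "S c (real p1) (real p2) = S c' (real p1) (real p2)"
    obtain n where n: "potential c p1 p2 n = threshold p1 p2 c + 1"
      using potential_reaches_above_threshold c p by blast
    obtain a1 a2 where alloc_c: "alloc c (real p1) (real p2) n = (a1, a2)"
      by fastforce
    then have alloc_c': "alloc c' (real p1) (real p2) n = (a1, a2)"
      using alloc_eq_if_S_eq[OF S_eq] by simp
    have "int p2 * int a1 - int p1 * int a2 = threshold p1 p2 c + 1"
      using n alloc_c by (simp add: potential_def)
    then have "\<not> prefer1 c (real p1) (real p2) a1 a2" "prefer1 c' (real p1) (real p2) a1 a2"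
      using prefer1_iff_threshold c(1) c'(1) p(1) less by simp_all
    then have "S c (real p1) (real p2) n \<noteq> S c' (real p1) (real p2) n"
      using alloc_c alloc_c' by (simp add: S_def)
    with S_eq show False by simp
  qed
  assume "S c (real p1) (real p2) = S c' (real p1) (real p2)"
  then show "threshold p1 p2 c = threshold p1 p2 c'"
    using S_differs[OF c c'] S_differs[OF c' c] by (metis linorder_neqE)
qed

theorem mainTheorem14:
  fixes p1 p2 :: nat
  assumes "0 < p2" and "p2 < p1" and "coprime p1 p2"
  shows "card {S c (real p1) (real p2) | c :: real. 0 \<le> c \<and> c \<le> 1} = p1 - p2 + 1"
proof -
  define cut where "cut m = real_of_int m / (real p1 - real p2)" for m
  define levels where "levels = {0..int p1 - int p2}"
  have cut_range: "0 \<le> cut m" "cut m \<le> 1" if "m \<in> levels" for m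
    using that assms(2) by (auto simp: cut_def levels_def field_simps)
  have threshold_cut: "threshold p1 p2 (cut m) = m" for m
    using threshold_of_int_div[OF assms(2)] by (simp add: cut_def)
  have "{S c (real p1) (real p2) | c. 0 \<le> c \<and> c \<le> 1} =
        (\<lambda>m. S (cut m) (real p1) (real p2)) ` levels"
  proof (intro equalityI subsetI)
    fix s assume "s \<in> {S c (real p1) (real p2) | c. 0 \<le> c \<and> c \<le> 1}"
    then obtain c where c: "0 \<le> c" "c \<le> 1" and s: "s = S c (real p1) (real p2)" by blast
    have level: "threshold p1 p2 c \<in> levels"
      using threshold_bounds[OF c] assms(2) by (simp add: levels_def)
    then have "s = S (cut (threshold p1 p2 c)) (real p1) (real p2)"
      using S_eq_iff_threshold_eq[OF c cut_range[OF level] assms] s threshold_cut by simp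
    with level show "s \<in> (\<lambda>m. S (cut m) (real p1) (real p2)) ` levels" by blast
  qed (use cut_range in auto)
  moreover have "inj_on (\<lambda>m. S (cut m) (real p1) (real p2)) levels"
  proof (rule inj_onI)
    fix m m' assume "m \<in> levels" "m' \<in> levels"
      and "S (cut m) (real p1) (real p2) = S (cut m') (real p1) (real p2)"
    then show "m = m'"
      using S_eq_iff_threshold_eq[OF cut_range cut_range assms] threshold_cut by metis
  qed
  ultimately show ?thesis
    using assms(2) by (simp add: card_image levels_def)
qed

end
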